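(* Suppose $D=\{(x,y),(y,x)\}$. Then every SCF-RT $(p,f)$ is rationalizable within the class of all RUM-CFs, i.e. there exists a RUM-CF $(u,g,r)$ that rationalizes $(p,f)$.
   Context: $X$ is a finite set of options; $C=\{(x,y): x,y\in X,\ x\neq y\}$; $D\subseteq C$ is the set of observed pairs. An SCF $p$ assigns to each $(x,y)\in D$ a number $p(x,y)>0$ with $p(x,y)+p(y,x)=1$. An SCF-RT is a pair $(p,f)$ where $p$ is an SCF and $f$ assigns to each $(x,y)\in D$ a strictly positive density $f(x,y)$ on $\mathbb{R}^+$ with cdf $F(x,y)$. A RUM is a pair $(u,g)$ with $u:X\to\mathbb{R}$ and $g$ assigning to each $(x,y)\in C$ a density $g(x,y)$ on $\mathbb{R}$ (cdf $G(x,y)$) with $\int v\,g(x,y)(v)\,dv=u(x)-u(y)$, $g(x,y)(v)=g(y,x)(-v)$ for all $v$, and connected support. A RUM-CF is $(u,g,r)$ with $(u,g)$ a RUM and $r:\mathbb{R}^{++}\to\mathbb{R}^+$ continuous, strictly decreasing where $r(v)>0$, $\lim_{v\to0}r(v)=\infty$, $\lim_{v\to\infty}r(v)=0$; $r^{-1}(t)$ ($t>0$) is the inverse of $r$ restricted to $\{r>0\}$. It rationalizes $(p,f)$ if for all $(x,y)\in D$: $G(x,y)(0)=p(y,x)$ and $\frac{1-G(x,y)(r^{-1}(t))}{1-G(x,y)(0)}=F(x,y)(t)$ for all $t>0$. *)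

theory Defs
  imports "HOL-Analysis.Analysis"
begin

definition SCF :: "('a \<times> 'a) set \<Rightarrow> ('a \<Rightarrow> 'a \<Rightarrow> real) \<Rightarrow> bool" where
  "SCF D p \<longleftrightarrow> (\<forall>(x, y) \<in> D. x \<noteq> y \<and> p x y > 0 \<and> p x y + p y x = 1)"

definition SCF_RT :: "('a \<times> 'a) set \<Rightarrow> ('a \<Rightarrow> 'a \<Rightarrow> real) \<Rightarrow> ('a \<Rightarrow> 'a \<Rightarrow> real \<Rightarrow> real) \<Rightarrow> bool" where
  "SCF_RT D p f \<longleftrightarrow> SCF D p \<and>
     (\<forall>(x, y) \<in> D. (\<forall>t > 0. f x y t > 0) \<and> (f x y has_integral 1) {0<..})"

definition cdf_pos :: "(real \<Rightarrow> real) \<Rightarrow> real \<Rightarrow> real" where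
  "cdf_pos h t = integral {0..t} h"

definition cdf :: "(real \<Rightarrow> real) \<Rightarrow> real \<Rightarrow> real" where
  "cdf h v = integral {..v} h"

definition RUM :: "('a \<Rightarrow> real) \<Rightarrow> ('a \<Rightarrow> 'a \<Rightarrow> real \<Rightarrow> real) \<Rightarrow> bool" where
  "RUM u g \<longleftrightarrow> (\<forall>x y. x \<noteq> y \<longrightarrow>
     (\<forall>v. g x y v \<ge> 0) \<and> (g x y has_integral 1) UNIV \<and>
     (\<lambda>v. v * g x y v) absolutely_integrable_on UNIV \<and>
     ((\<lambda>v. v * g x y v) has_integral (u x - u y)) UNIV \<and>
     (\<forall>v. g x y v = g y x (- v)) \<and>
     connected {v. g x y v > 0})"

definition CF :: "(real \<Rightarrow> real) \<Rightarrow> bool" where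
  "CF r \<longleftrightarrow> continuous_on {0<..} r \<and> (\<forall>v > 0. r v \<ge> 0) \<and>
     (\<forall>v w. 0 < v \<longrightarrow> v < w \<longrightarrow> r v > 0 \<longrightarrow> r w > 0 \<longrightarrow> r w < r v) \<and>
     filterlim r at_top (at_right 0) \<and> (r \<longlongrightarrow> 0) at_top"

definition rinv :: "(real \<Rightarrow> real) \<Rightarrow> real \<Rightarrow> real" where
  "rinv r t = the_inv_into {v. 0 < v \<and> 0 < r v} r t"

definition RUM_CF :: "('a \<Rightarrow> real) \<Rightarrow> ('a \<Rightarrow> 'a \<Rightarrow> real \<Rightarrow> real) \<Rightarrow> (real \<Rightarrow> real) \<Rightarrow> bool" where
  "RUM_CF u g r \<longleftrightarrow> RUM u g \<and> CF r"

definition rationalizes ::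
  "('a \<times> 'a) set \<Rightarrow> ('a \<Rightarrow> 'a \<Rightarrow> real) \<Rightarrow> ('a \<Rightarrow> 'a \<Rightarrow> real \<Rightarrow> real) \<Rightarrow>
   ('a \<Rightarrow> real) \<Rightarrow> ('a \<Rightarrow> 'a \<Rightarrow> real \<Rightarrow> real) \<Rightarrow> (real \<Rightarrow> real) \<Rightarrow> bool" where
  "rationalizes D p f u g r \<longleftrightarrow> (\<forall>(x, y) \<in> D.
     cdf (g x y) 0 = p y x \<and>
     (\<forall>t > 0. (1 - cdf (g x y) (rinv r t)) / (1 - cdf (g x y) 0) = cdf_pos (f x y) t))"

end

(* Let P = p(x,y). With the response function r(v) = max 0 (1/v - 1) one has r^-1(t) = 1/(1+t).
   If T1 and T2 are response times with densities f(x,y) and f(y,x), let the utility difference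
   V for (x,y) be 1/(1+T1) with probability P and -1/(1+T2) with probability 1 - P. Then
   Pr(V <= 0) = 1 - P and Pr(V > r^-1(t)) = P * Pr(T1 <= t), which is exactly rationalization
   on (x,y); the pair (y,x) gets the law of -V, which is the same construction with the roles
   of x and y exchanged. V is supported in [-1,1], so it has a mean m; setting u(x) = m and
   u = 0 elsewhere, every remaining pair gets a uniform density centred at its utility
   difference. *)
theory Submission
  imports Defs
begin

lemma has_absolute_integral_reflect_UNIV:
  fixes f :: "real \<Rightarrow> real"
  assumes "f absolutely_integrable_on UNIV" and "(f has_integral i) UNIV"
  shows "(\<lambda>x. f (-x)) absolutely_integrable_on UNIV \<and> ((\<lambda>x. f (-x)) has_integral i) UNIV"
proof -
  have "(\<lambda>x. f (-x)) absolutely_integrable_on UNIV \<and> integral UNIV (\<lambda>x. f (-x)) = i"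
    using has_absolute_integral_reflect_real[of UNIV UNIV f i] assms
    by (simp add: integral_unique)
  then show ?thesis
    by (metis integrable_integral set_lebesgue_integral_eq_integral(1))
qed

lemma cdf_eq_one_minus_tail:
  assumes "(g has_integral 1) UNIV" and "(g has_integral I) {s<..}"
  shows "cdf g s = 1 - I"
proof -
  have "((\<lambda>v. if v \<in> {s<..} then g v else 0) has_integral I) UNIV"
    using assms(2) by (simp only: has_integral_restrict_UNIV)
  then have "((\<lambda>v. g v - (if v \<in> {s<..} then g v else 0)) has_integral 1 - I) UNIV"
    using assms(1) by (intro has_integral_diff)
  moreover have "(\<lambda>v. g v - (if v \<in> {s<..} then g v else 0)) = (\<lambda>v. if v \<in> {..s} then g v else 0)"
    by auto
  ultimately have "(g has_integral 1 - I) {..s}"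
    by (simp only: has_integral_restrict_UNIV)
  then show ?thesis
    by (simp add: cdf_def integral_unique)
qed

lemma absolutely_integrable_mult_id_if_vanishing_outside:
  fixes g :: "real \<Rightarrow> real"
  assumes "g absolutely_integrable_on UNIV" and "\<And>v. v \<notin> {-a..a} \<Longrightarrow> g v = 0"
  shows "(\<lambda>v. v * g v) absolutely_integrable_on UNIV"
proof -
  have "(\<lambda>v. max (-a) (min a v) * g v) absolutely_integrable_on UNIV"
  proof (rule absolutely_integrable_bounded_measurable_product_real)
    show "(\<lambda>v::real. max (-a) (min a v)) \<in> borel_measurable (lebesgue_on UNIV)"
      by (intro continuous_imp_measurable_on_sets_lebesgue continuous_intros) auto
    show "bounded ((\<lambda>v::real. max (-a) (min a v)) ` UNIV)"
      by (rule bounded_subset[of "{-\<bar>a\<bar>..\<bar>a\<bar>}"]) auto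
  qed (use assms(1) in auto)
  moreover have "max (-a) (min a v) * g v = v * g v" for v
    using assms(2)[of v] by (cases "v \<in> {-a..a}") auto
  ultimately show ?thesis by simp
qed

text \<open>The density of 1/(1+T) when T has density h on the positive half-line.\<close>
definition recip_density :: "(real \<Rightarrow> real) \<Rightarrow> real \<Rightarrow> real" where
  "recip_density h v = (if 0 < v \<and> v < 1 then h (1/v - 1) / v\<^sup>2 else 0)"

lemma recip_density_eq_0: "\<not> (0 < v \<and> v < 1) \<Longrightarrow> recip_density h v = 0"
  by (auto simp: recip_density_def)

lemma recip_density_pos:
  "(\<And>t. 0 < t \<Longrightarrow> 0 < h t) \<Longrightarrow> 0 < v \<Longrightarrow> v < 1 \<Longrightarrow> 0 < recip_density h v"
  by (simp add: recip_density_def)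

lemma recip_density_nonneg: "(\<And>t. 0 < t \<Longrightarrow> 0 \<le> h t) \<Longrightarrow> 0 \<le> recip_density h v"
  by (simp add: recip_density_def)

lemma has_integral_recip_density_image:
  fixes h :: "real \<Rightarrow> real"
  assumes S: "S \<subseteq> {0<..}" "S \<in> sets lebesgue" and h: "h absolutely_integrable_on S"
  shows "(recip_density h has_integral integral S h) ((\<lambda>t. 1/(1+t)) ` S)"
proof -
  have der: "((\<lambda>t. 1/(1+t)) has_field_derivative -1/(1+t)\<^sup>2) (at t within S)" if "t \<in> S" for t
    using that S by (auto intro!: derivative_eq_intros simp: power2_eq_square)
  have inj: "inj_on (\<lambda>t. 1/(1+t)) S"
    using S by (auto simp: inj_on_def field_simps)
  have jacobian: "\<bar>-1/(1+t)\<^sup>2\<bar> * recip_density h (1/(1+t)) = h t" if "t \<in> S" for t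
    using that S by (auto simp: recip_density_def field_simps)
  have "(\<lambda>t. \<bar>-1/(1+t)\<^sup>2\<bar> * recip_density h (1/(1+t))) absolutely_integrable_on S
      \<and> integral S (\<lambda>t. \<bar>-1/(1+t)\<^sup>2\<bar> * recip_density h (1/(1+t))) = integral S h"
    using absolutely_integrable_spike[OF h negligible_empty] jacobian
    by (auto intro: integral_cong)
  then have "recip_density h absolutely_integrable_on (\<lambda>t. 1/(1+t)) ` S
      \<and> integral ((\<lambda>t. 1/(1+t)) ` S) (recip_density h) = integral S h"
    using has_absolute_integral_change_of_variables_1'[OF S(2) der inj] by blast
  then show ?thesis
    by (metis integrable_integral set_lebesgue_integral_eq_integral(1))
qed

lemma image_recip_succ_greaterThan: "(\<lambda>t::real. 1/(1+t)) ` {0<..} = {0<..<1}"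
proof (intro set_eqI iffI)
  fix v :: real assume "v \<in> {0<..<1}"
  then have "v = 1/(1 + (1/v - 1))" "1/v - 1 \<in> {0<..}" by (auto simp: field_simps)
  then show "v \<in> (\<lambda>t. 1/(1+t)) ` {0<..}" by blast
qed auto

lemma image_recip_succ_greaterThanLessThan:
  assumes "0 < b" shows "(\<lambda>t::real. 1/(1+t)) ` {0<..<b} = {1/(1+b)<..<1}"
proof (intro set_eqI iffI)
  fix v :: real assume v: "v \<in> {1/(1+b)<..<1}"
  have "0 < 1/(1+b)" using assms by simp
  with v have "0 < v" by (simp only: greaterThanLessThan_iff) linarith
  with v have "v = 1/(1 + (1/v - 1))" "1/v - 1 \<in> {0<..<b}"
    using assms by (auto simp: field_simps)
  then show "v \<in> (\<lambda>t. 1/(1+t)) ` {0<..<b}" by blast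
qed (use assms in \<open>auto simp: field_simps\<close>)

lemma recip_density_has_integral:
  assumes "h absolutely_integrable_on {0<..}" and "{0<..<1} \<subseteq> T"
  shows "(recip_density h has_integral integral {0<..} h) T"
proof (rule has_integral_on_superset)
  show "(recip_density h has_integral integral {0<..} h) {0<..<1}"
    using has_integral_recip_density_image[OF _ _ assms(1)] image_recip_succ_greaterThan by simp
qed (use assms(2) in \<open>auto simp: recip_density_def\<close>)

lemma recip_density_has_integral_tail:
  assumes h: "h absolutely_integrable_on {0<..}" and t: "0 < t"
  shows "(recip_density h has_integral cdf_pos h t) {1/(1+t)<..}"
proof -
  have "negligible {0, t}" by simp
  then have "integral {0<..<t} h = cdf_pos h t"
    unfolding cdf_pos_def by (intro integral_spike_set; rule negligible_subset) auto
  moreover have "h absolutely_integrable_on {0<..<t}"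
    using h by (rule set_integrable_subset) auto
  then have "(recip_density h has_integral integral {0<..<t} h) ((\<lambda>t. 1/(1+t)) ` {0<..<t})"
    by (intro has_integral_recip_density_image) auto
  ultimately have "(recip_density h has_integral cdf_pos h t) {1/(1+t)<..<1}"
    using image_recip_succ_greaterThanLessThan[OF t] by simp
  moreover have "negligible {v \<in> {1/(1+t)<..} - {1/(1+t)<..<1}. recip_density h v \<noteq> 0}"
    by (rule negligible_subset[OF negligible_empty]) (auto simp: recip_density_def)
  moreover have "negligible {v \<in> {1/(1+t)<..<1} - {1/(1+t)<..}. recip_density h v \<noteq> 0}"
    by (rule negligible_subset[OF negligible_empty]) auto
  ultimately show ?thesis
    using has_integral_spike_set_eq by blast
qed

text \<open>The value at 0 does not affect any integral, but it makes the support the interval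
  (-1, 1) instead of (-1, 0) \<union> (0, 1), which the connectedness condition of a RUM requires.\<close>
definition two_sided_density :: "real \<Rightarrow> (real \<Rightarrow> real) \<Rightarrow> (real \<Rightarrow> real) \<Rightarrow> real \<Rightarrow> real" where
  "two_sided_density P h1 h2 v =
     (if v = 0 then 1 else P * recip_density h1 v + (1 - P) * recip_density h2 (-v))"

lemma two_sided_density_uminus:
  "two_sided_density P h1 h2 (-v) = two_sided_density (1 - P) h2 h1 v"
  by (simp add: two_sided_density_def algebra_simps)

lemma two_sided_density_eq_0: "v \<le> -1 \<or> 1 \<le> v \<Longrightarrow> two_sided_density P h1 h2 v = 0"
  by (auto simp: two_sided_density_def recip_density_def)

locale scf_rt_pair =
  fixes P :: real and h1 h2 :: "real \<Rightarrow> real"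
  assumes P: "0 < P" "P < 1"
    and h1_pos: "\<And>t. 0 < t \<Longrightarrow> 0 < h1 t" and h1_integral: "(h1 has_integral 1) {0<..}"
    and h2_pos: "\<And>t. 0 < t \<Longrightarrow> 0 < h2 t" and h2_integral: "(h2 has_integral 1) {0<..}"
begin

lemma swap: "scf_rt_pair (1 - P) h2 h1"
  using P h1_pos h1_integral h2_pos h2_integral by unfold_locales auto

lemma h1_absolutely_integrable: "h1 absolutely_integrable_on {0<..}"
  using h1_integral h1_pos by (intro nonnegative_absolutely_integrable_1) (auto intro: less_imp_le)

lemma recip_density_h1_has_integral: "{0<..<1} \<subseteq> T \<Longrightarrow> (recip_density h1 has_integral 1) T"
  using recip_density_has_integral[OF h1_absolutely_integrable] h1_integral
  by (simp add: integral_unique)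

lemma two_sided_density_nonneg: "0 \<le> two_sided_density P h1 h2 v"
proof -
  have "0 \<le> recip_density h1 v" "0 \<le> recip_density h2 (-v)"
    using h1_pos h2_pos by (simp_all add: recip_density_nonneg less_imp_le)
  then show ?thesis
    using P by (simp add: two_sided_density_def)
qed

lemma two_sided_density_has_integral: "(two_sided_density P h1 h2 has_integral 1) UNIV"
proof -
  have h2: "(recip_density h2 has_integral 1) UNIV"
    by (rule scf_rt_pair.recip_density_h1_has_integral[OF swap]) simp
  have "recip_density h2 absolutely_integrable_on UNIV"
    using h2 h2_pos
    by (intro nonnegative_absolutely_integrable_1) (auto intro: recip_density_nonneg less_imp_le)
  then have "((\<lambda>v. recip_density h2 (-v)) has_integral 1) UNIV"
    using has_absolute_integral_reflect_UNIV h2 by simp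
  then have "((\<lambda>v. P * recip_density h1 v + (1 - P) * recip_density h2 (-v))
      has_integral P * 1 + (1 - P) * 1) UNIV"
    by (intro has_integral_add has_integral_mult_right recip_density_h1_has_integral) auto
  then have "((\<lambda>v. P * recip_density h1 v + (1 - P) * recip_density h2 (-v)) has_integral 1) UNIV"
    by simp
  then show ?thesis
    by (rule has_integral_spike[OF negligible_sing[of 0], rotated]) (simp add: two_sided_density_def)
qed

lemma two_sided_density_has_integral_tail:
  assumes "0 \<le> s" and "(recip_density h1 has_integral I) {s<..}"
  shows "(two_sided_density P h1 h2 has_integral P * I) {s<..}"
proof -
  have "two_sided_density P h1 h2 v = P * recip_density h1 v" if "v \<in> {s<..}" for v
    using that assms(1) by (auto simp: two_sided_density_def recip_density_def)
  then show ?thesis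
    by (subst has_integral_cong) (auto intro: has_integral_mult_right[OF assms(2)])
qed

lemma cdf_two_sided_density_0: "cdf (two_sided_density P h1 h2) 0 = 1 - P"
proof -
  have "(recip_density h1 has_integral 1) {0<..}"
    by (rule recip_density_h1_has_integral) (simp add: subset_eq)
  then show ?thesis
    using cdf_eq_one_minus_tail[OF two_sided_density_has_integral
        two_sided_density_has_integral_tail[OF order_refl]] by simp
qed

lemma cdf_two_sided_density_recip_succ:
  assumes "0 < t"
  shows "cdf (two_sided_density P h1 h2) (1/(1+t)) = 1 - P * cdf_pos h1 t"
proof (rule cdf_eq_one_minus_tail[OF two_sided_density_has_integral])
  show "(two_sided_density P h1 h2 has_integral P * cdf_pos h1 t) {1/(1+t)<..}"
    using assms
    by (intro two_sided_density_has_integral_tail recip_density_has_integral_tail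
        h1_absolutely_integrable) simp_all
qed

lemma two_sided_density_pos_iff: "0 < two_sided_density P h1 h2 v \<longleftrightarrow> -1 < v \<and> v < 1"
proof -
  consider "v = 0" | "0 < v" "v < 1" | "-1 < v" "v < 0" | "v \<le> -1 \<or> 1 \<le> v"
    by linarith
  then show ?thesis
  proof cases
    case 2
    have "0 < recip_density h1 v"
      by (rule recip_density_pos) (use h1_pos 2 in auto)
    then show ?thesis
      using P 2 by (simp add: two_sided_density_def recip_density_eq_0)
  next
    case 3
    have "0 < recip_density h2 (-v)"
      by (rule recip_density_pos) (use h2_pos 3 in auto)
    then show ?thesis
      using P 3 by (simp add: two_sided_density_def recip_density_eq_0)
  next
    case 4
    then show ?thesis
      using two_sided_density_eq_0[of v] by auto
  qed (simp add: two_sided_density_def)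
qed

end

definition utility_density :: "(real \<Rightarrow> real) \<Rightarrow> real \<Rightarrow> bool" where
  "utility_density g m \<longleftrightarrow> (\<forall>v. 0 \<le> g v) \<and> (g has_integral 1) UNIV \<and>
     (\<lambda>v. v * g v) absolutely_integrable_on UNIV \<and> ((\<lambda>v. v * g v) has_integral m) UNIV \<and>
     connected {v. 0 < g v}"

lemma RUM_iff_utility_density:
  "RUM u g \<longleftrightarrow>
     (\<forall>x y. x \<noteq> y \<longrightarrow> utility_density (g x y) (u x - u y) \<and> (\<forall>v. g x y v = g y x (-v)))"
  unfolding RUM_def utility_density_def by meson

lemma utility_density_reflect:
  assumes "utility_density g m"
  shows "utility_density (\<lambda>v. g (-v)) (-m)"
proof -
  have nonneg: "\<And>v. 0 \<le> g v" and g: "(g has_integral 1) UNIV"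
    and mean_abs: "(\<lambda>v. v * g v) absolutely_integrable_on UNIV"
    and mean: "((\<lambda>v. v * g v) has_integral m) UNIV" and supp: "connected {v. 0 < g v}"
    using assms by (auto simp: utility_density_def)
  have "g absolutely_integrable_on UNIV"
    using g nonneg by (intro nonnegative_absolutely_integrable_1) auto
  then have "((\<lambda>v. g (-v)) has_integral 1) UNIV"
    using has_absolute_integral_reflect_UNIV g by simp
  moreover have "(\<lambda>w. - (w * g w)) absolutely_integrable_on UNIV"
    using absolutely_integrable_on_scaleR_iff[where c = "-1" and f = "\<lambda>w. w * g w"] mean_abs by simp
  then have "(\<lambda>v. - ((-v) * g (-v))) absolutely_integrable_on UNIV
      \<and> ((\<lambda>v. - ((-v) * g (-v))) has_integral -m) UNIV"
    using has_absolute_integral_reflect_UNIV[of "\<lambda>w. - (w * g w)"] has_integral_neg[OF mean] by blast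
  moreover have "{v. 0 < g (-v)} = uminus ` {v. 0 < g v}"
    by (force simp: image_iff)
  then have "connected {v. 0 < g (-v)}"
    using connected_linear_image[OF linear_uminus supp] by simp
  ultimately show ?thesis
    using nonneg by (simp add: utility_density_def)
qed

definition uniform_density :: "real \<Rightarrow> real \<Rightarrow> real" where
  "uniform_density c v = (if v \<in> {c - 1/2..c + 1/2} then 1 else 0)"

lemma uniform_density_uminus: "uniform_density (-c) (-v) = uniform_density c v"
  by (auto simp: uniform_density_def)

lemma utility_density_uniform: "utility_density (uniform_density c) c"
proof -
  let ?I = "{c - 1/2..c + 1/2}"
  have mean_eq: "(\<lambda>v. v * uniform_density c v) = (\<lambda>v. if v \<in> ?I then v else 0)"
    by (auto simp: uniform_density_def)
  have "((\<lambda>v. 1::real) has_integral 1) ?I"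
    using has_integral_const_real[of "1::real" "c - 1/2" "c + 1/2"] by simp
  then have "(uniform_density c has_integral 1) UNIV"
    unfolding uniform_density_def by (simp only: has_integral_restrict_UNIV)
  moreover have "((\<lambda>v. v) has_integral (c + 1/2)\<^sup>2/2 - (c - 1/2)\<^sup>2/2) ?I"
    by (intro fundamental_theorem_of_calculus)
      (auto intro!: derivative_eq_intros simp flip: has_real_derivative_iff_has_vector_derivative)
  then have "((\<lambda>v. v * uniform_density c v) has_integral c) UNIV"
    unfolding mean_eq has_integral_restrict_UNIV by (simp add: power2_eq_square field_simps)
  moreover have "(\<lambda>v::real. v) absolutely_integrable_on ?I"
    by (intro absolutely_integrable_continuous_real continuous_intros)
  then have "(\<lambda>v. v * uniform_density c v) absolutely_integrable_on UNIV"
    unfolding mean_eq absolutely_integrable_restrict_UNIV .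
  moreover have "{v. 0 < uniform_density c v} = ?I"
    by (auto simp: uniform_density_def)
  ultimately show ?thesis
    by (simp add: utility_density_def uniform_density_def)
qed

lemma RUM_extending_utility_density:
  assumes "x \<noteq> y" and "utility_density G m"
  shows "\<exists>u g. RUM u g \<and> g x y = G"
proof -
  define u where "u a = (if a = x then m else 0)" for a
  define g where "g a b = (if (a, b) = (x, y) then G else if (a, b) = (y, x) then (\<lambda>v. G (-v))
      else uniform_density (u a - u b))" for a b
  have "utility_density (g a b) (u a - u b) \<and> (\<forall>v. g a b v = g b a (-v))" if "a \<noteq> b" for a b
  proof -
    consider "(a, b) = (x, y)" | "(a, b) = (y, x)" | "(a, b) \<noteq> (x, y)" "(a, b) \<noteq> (y, x)"
      by blast
    then show ?thesis
    proof cases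
      case 1
      then have "g a b = G" "g b a = (\<lambda>v. G (-v))" "u a - u b = m"
        using assms(1) by (auto simp: g_def u_def)
      then show ?thesis
        using assms(2) by simp
    next
      case 2
      then have "g a b = (\<lambda>v. G (-v))" "g b a = G" "u a - u b = -m"
        using assms(1) by (auto simp: g_def u_def)
      then show ?thesis
        using utility_density_reflect[OF assms(2)] by simp
    next
      case 3
      moreover have "(b, a) \<noteq> (x, y)" "(b, a) \<noteq> (y, x)"
        using 3 by auto
      ultimately have "g a b = uniform_density (u a - u b)" "g b a = uniform_density (u b - u a)"
        unfolding g_def by (simp_all only: if_False)
      moreover have "uniform_density (u a - u b) v = uniform_density (u b - u a) (-v)" for v
        using uniform_density_uminus[of "u a - u b" v] by simp
      ultimately show ?thesis
        by (simp add: utility_density_uniform)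
    qed
  qed
  then have "RUM u g"
    unfolding RUM_iff_utility_density by blast
  moreover have "g x y = G"
    by (simp add: g_def)
  ultimately show ?thesis by blast
qed

lemma (in scf_rt_pair) utility_density_two_sided_density:
  "utility_density (two_sided_density P h1 h2) (integral UNIV (\<lambda>v. v * two_sided_density P h1 h2 v))"
proof -
  have "two_sided_density P h1 h2 absolutely_integrable_on UNIV"
    using two_sided_density_has_integral two_sided_density_nonneg
    by (intro nonnegative_absolutely_integrable_1) auto
  moreover have "two_sided_density P h1 h2 v = 0" if "v \<notin> {-1..1}" for v
    using that by (intro two_sided_density_eq_0) auto
  ultimately have mean: "(\<lambda>v. v * two_sided_density P h1 h2 v) absolutely_integrable_on UNIV"
    by (rule absolutely_integrable_mult_id_if_vanishing_outside)
  have "{v. 0 < two_sided_density P h1 h2 v} = {-1<..<1}"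
    by (auto simp: two_sided_density_pos_iff)
  then show ?thesis
    using two_sided_density_nonneg two_sided_density_has_integral mean
      integrable_integral[OF set_lebesgue_integral_eq_integral(1)[OF mean]]
    by (simp add: utility_density_def)
qed

definition recip_response :: "real \<Rightarrow> real" where
  "recip_response v = max 0 (1/v - 1)"

lemma CF_recip_response: "CF recip_response"
  unfolding CF_def
proof (intro conjI allI impI)
  show "continuous_on {0<..} recip_response"
    unfolding recip_response_def by (intro continuous_intros) auto
  show "0 \<le> recip_response v" for v
    by (simp add: recip_response_def)
  show "recip_response w < recip_response v"
    if "0 < v" "v < w" "0 < recip_response w" for v w
  proof -
    have "1/w < 1/v"
      using that by (simp add: divide_strict_left_mono)
    then show ?thesis
      using that(3) by (simp add: recip_response_def)
  qed
  have "filterlim (\<lambda>v::real. inverse v - 1) at_top (at_right 0)"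
    by (rule filterlim_tendsto_add_at_top[OF tendsto_const filterlim_inverse_at_top_right,
        of "-1", simplified add.commute[of "-1"], simplified])
  then show "filterlim recip_response at_top (at_right 0)"
    by (rule filterlim_at_top_mono) (simp add: recip_response_def divide_inverse)
  have "eventually (\<lambda>v. recip_response v = 0) at_top"
    using eventually_ge_at_top[of 1] by eventually_elim (simp add: recip_response_def)
  then show "(recip_response \<longlongrightarrow> 0) at_top"
    by (rule tendsto_eventually)
qed

lemma rinv_recip_response:
  assumes "0 < t" shows "rinv recip_response t = 1/(1+t)"
  unfolding rinv_def
proof (rule the_inv_into_f_eq)
  have pos_eq: "recip_response v = 1/v - 1" if "0 < recip_response v" for v
    using that by (simp add: recip_response_def)
  show "inj_on recip_response {v. 0 < v \<and> 0 < recip_response v}"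
  proof (rule inj_onI)
    fix v w
    assume v: "v \<in> {v. 0 < v \<and> 0 < recip_response v}" and w: "w \<in> {v. 0 < v \<and> 0 < recip_response v}"
      and "recip_response v = recip_response w"
    moreover have "recip_response v = 1/v - 1" "recip_response w = 1/w - 1"
      using v w pos_eq by blast+
    ultimately show "v = w"
      by simp
  qed
  show "recip_response (1/(1+t)) = t" "1/(1+t) \<in> {v. 0 < v \<and> 0 < recip_response v}"
    using assms by (simp_all add: recip_response_def)
qed

lemma (in scf_rt_pair) two_sided_density_rationalizes:
  "cdf (two_sided_density P h1 h2) 0 = 1 - P \<and>
   (\<forall>t>0. (1 - cdf (two_sided_density P h1 h2) (rinv recip_response t)) /
      (1 - cdf (two_sided_density P h1 h2) 0) = cdf_pos h1 t)"
  using P by (simp add: cdf_two_sided_density_0 cdf_two_sided_density_recip_succ rinv_recip_response)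

theorem proposition7:
  fixes x y :: "'a::finite"
    and p :: "'a \<Rightarrow> 'a \<Rightarrow> real"
    and f :: "'a \<Rightarrow> 'a \<Rightarrow> real \<Rightarrow> real"
  assumes "x \<noteq> y"
    and "SCF_RT {(x, y), (y, x)} p f"
  shows "\<exists>u g r. RUM_CF u g r \<and> rationalizes {(x, y), (y, x)} p f u g r"
proof -
  have p: "0 < p x y" "0 < p y x" "1 - p x y = p y x" "1 - p y x = p x y"
    and f_pos: "\<And>t. 0 < t \<Longrightarrow> 0 < f x y t" "\<And>t. 0 < t \<Longrightarrow> 0 < f y x t"
    and f_integral: "(f x y has_integral 1) {0<..}" "(f y x has_integral 1) {0<..}"
    using assms(2) unfolding SCF_RT_def SCF_def by (simp_all add: algebra_simps)
  interpret xy: scf_rt_pair "p x y" "f x y" "f y x"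
    using p f_pos f_integral by unfold_locales auto
  interpret yx: scf_rt_pair "p y x" "f y x" "f x y"
    using p f_pos f_integral by unfold_locales auto
  obtain u g where RUM: "RUM u g" and g_xy: "g x y = two_sided_density (p x y) (f x y) (f y x)"
    using RUM_extending_utility_density[OF assms(1) xy.utility_density_two_sided_density] by blast
  have g_yx: "g y x = two_sided_density (p y x) (f y x) (f x y)"
  proof
    fix v
    have "g x y (-v) = g y x v"
      using RUM_iff_utility_density[THEN iffD1, rule_format, OF RUM assms(1)] by simp
    then show "g y x v = two_sided_density (p y x) (f y x) (f x y) v"
      by (simp add: g_xy two_sided_density_uminus p(3))
  qed
  have "rationalizes {(x, y), (y, x)} p f u g recip_response"
    using xy.two_sided_density_rationalizes yx.two_sided_density_rationalizes
    unfolding rationalizes_def p(3,4) by (auto simp: g_xy g_yx)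
  then show ?thesis
    using RUM CF_recip_response unfolding RUM_CF_def by blast
qed

end
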